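(* Let $0\le\lambda\le1$ and let $\varphi$ be as described in the context, with $\varphi(z)=1+B_1z+B_2z^2+\cdots$. If $f(z)=z+\sum_{n\ge2}a_nz^n$ belongs to the class $\mathcal{G}^{\lambda}_{\sigma}(\varphi)$, then \[ |a_2|\le \frac{B_1\sqrt{B_1}}{\sqrt{4B_1+|(3-\lambda)B_1^2-4B_2|}} \] and \[ |a_3|\le\begin{cases}\left(1-\dfrac{4}{3(1+\lambda)B_1}\right)\dfrac{B_1^3}{4B_1+|(3-\lambda)B_1^2-4B_2|}+\dfrac{B_1}{3(1+\lambda)}, & \text{if } B_1\ge \dfrac{4}{3(1+\lambda)},\\[3mm] \dfrac{B_1}{3(1+\lambda)}, & \text{if } B_1< \dfrac{4}{3(1+\lambda)}.\end{cases} \]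
   Context: $\mathbb{U}=\{z\in\mathbb{C}:|z|<1\}$. For analytic $f,g$ on $\mathbb{U}$, $f\prec g$ (subordination) means there is an analytic $w$ on $\mathbb{U}$ with $w(0)=0$, $|w(z)|<1$, and $f(z)=g(w(z))$. The function $\varphi$ is analytic and univalent in $\mathbb{U}$ with positive real part, $\varphi(0)=1$, $\varphi'(0)>0$, $\varphi$ maps $\mathbb{U}$ onto a region starlike with respect to $1$ and symmetric with respect to the real axis; its expansion is $\varphi(z)=1+B_1z+B_2z^2+B_3z^3+\cdots$ with all coefficients real and $B_1>0$. $\sigma$ denotes the class of bi-univalent functions: analytic functions $f(z)=z+\sum_{n\ge2}a_nz^n$ on $\mathbb{U}$ that are univalent in $\mathbb{U}$ and whose inverse $g=f^{-1}$, $g(w)=w-a_2w^2+(2a_2^2-a_3)w^3-(5a_2^3-5a_2a_3+a_4)w^4+\cdots$, is also univalent in $\mathbb{U}$ (i.e. extends univalently to $\mathbb{U}$). For $0\le\lambda\le1$, $\mathcal{G}^{\lambda}_{\sigma}(\varphi)$ is the set of $f\in\sigma$ such that $(1-\lambda)f'(z)+\lambda\left(1+\frac{zf''(z)}{f'(z)}\right)\prec\varphi(z)$ for $z\in\mathbb{U}$ and $(1-\lambda)g'(w)+\lambda\left(1+\frac{wg''(w)}{g'(w)}\right)\prec\varphi(w)$ for $w\in\mathbb{U}$, where $g=f^{-1}$. *)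

theory Defs
  imports "HOL-Analysis.Analysis"
begin

definition unit_disc :: "complex set" where
  "unit_disc = ball 0 1"

definition subordinate :: "(complex \<Rightarrow> complex) \<Rightarrow> (complex \<Rightarrow> complex) \<Rightarrow> bool" where
  "subordinate F G \<longleftrightarrow> (\<exists>w. w holomorphic_on unit_disc \<and> w 0 = 0 \<and>
      (\<forall>z\<in>unit_disc. norm (w z) < 1) \<and> (\<forall>z\<in>unit_disc. F z = G (w z)))"

definition taylor_coeff :: "(complex \<Rightarrow> complex) \<Rightarrow> nat \<Rightarrow> complex" where
  "taylor_coeff f n = (deriv ^^ n) f 0 / of_nat (fact n)"

definition admissible_phi :: "(complex \<Rightarrow> complex) \<Rightarrow> bool" where
  "admissible_phi \<phi> \<longleftrightarrow>
     \<phi> holomorphic_on unit_disc \<and> inj_on \<phi> unit_disc \<and>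
     (\<forall>z\<in>unit_disc. Re (\<phi> z) > 0) \<and> \<phi> 0 = 1 \<and>
     Im (deriv \<phi> 0) = 0 \<and> Re (deriv \<phi> 0) > 0 \<and>
     (\<forall>z\<in>unit_disc. \<forall>t\<in>{0..1::real}. 1 + of_real t * (\<phi> z - 1) \<in> \<phi> ` unit_disc) \<and>
     (\<forall>v\<in>\<phi> ` unit_disc. cnj v \<in> \<phi> ` unit_disc) \<and>
     (\<forall>n. Im (taylor_coeff \<phi> n) = 0)"

definition inverse_ext :: "(complex \<Rightarrow> complex) \<Rightarrow> (complex \<Rightarrow> complex) \<Rightarrow> bool" where
  "inverse_ext f g \<longleftrightarrow> g holomorphic_on unit_disc \<and> inj_on g unit_disc \<and>
      (\<forall>\<^sub>F z in nhds 0. g (f z) = z)"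

definition bi_univalent :: "(complex \<Rightarrow> complex) \<Rightarrow> bool" where
  "bi_univalent f \<longleftrightarrow> f holomorphic_on unit_disc \<and> inj_on f unit_disc \<and>
      f 0 = 0 \<and> deriv f 0 = 1 \<and> (\<exists>g. inverse_ext f g)"

definition G_expr :: "real \<Rightarrow> (complex \<Rightarrow> complex) \<Rightarrow> complex \<Rightarrow> complex" where
  "G_expr lam f z = (1 - of_real lam) * deriv f z
      + of_real lam * (1 + z * deriv (deriv f) z / deriv f z)"

definition class_G :: "real \<Rightarrow> (complex \<Rightarrow> complex) \<Rightarrow> (complex \<Rightarrow> complex) set" where
  "class_G lam \<phi> = {f. bi_univalent f \<and>
      subordinate (G_expr lam f) \<phi> \<and>
      (\<forall>g. inverse_ext f g \<longrightarrow> subordinate (G_expr lam g) \<phi>)}"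

end

theory Submission
  imports Defs "HOL-Complex_Analysis.Complex_Analysis"
begin

text \<open>Let u and v be the Schwarz functions of the two subordinations. Comparing the first two
  derivatives at 0 of both sides, and using g''(0) = -f''(0) and g'''(0) = 3 f''(0)^2 - f'''(0)
  for the inverse g, gives f''(0) = B1 u'(0) = -B1 v'(0) together with two equations for f'''(0).
  Their sum eliminates f'''(0) and expresses a2^2 ((3 - \<lambda>) B1^2 - 4 B2) through
  B1^3 (u''(0) + v''(0)); their difference expresses a3 - a2^2 through B1 (u''(0) - v''(0)).
  Both estimates then follow from |w''(0)| \<le> 2 (1 - |w'(0)|^2), valid for every self-map w
  of the disc with w(0) = 0, and from |u'(0)| = 2 |a2| / B1.\<close>


lemma deriv_cong_open:
  assumes "open S" "z \<in> S" "\<And>x. x \<in> S \<Longrightarrow> f x = g x"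
  shows "deriv f z = deriv g z"
  using eventually_nhds_in_open[OF assms(1,2)]
  by (intro deriv_cong_ev) (auto elim!: eventually_mono simp: assms(3))

lemma Schwarz_Pick_deriv_0:
  assumes holh: "h holomorphic_on ball 0 1" and lt1: "\<And>z. z \<in> ball 0 1 \<Longrightarrow> norm (h z) < 1"
  shows "norm (deriv h 0) \<le> 1 - norm (h 0)^2"
proof -
  define a where "a = h 0"
  have a1: "norm a < 1" using lt1[of 0] by (simp add: a_def)
  have cnj_a_a: "1 - cnj a * a = of_real (1 - norm a ^ 2)"
    by (simp add: complex_norm_square[symmetric] mult.commute del: of_real_power)
  have pos: "1 - norm a ^ 2 > 0" using a1 by (simp add: abs_square_less_1)
  define k where "k = (\<lambda>z. Moebius_function 0 a (h z))"
  have holk: "k holomorphic_on ball 0 1"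
    unfolding k_def
    using holomorphic_on_compose_gen[OF holh Moebius_function_holomorphic[OF a1, of 0]] lt1
    by (auto simp: o_def image_subset_iff)
  have k0: "k 0 = 0" by (simp add: k_def a_def Moebius_function_eq_zero)
  have klt: "\<And>z. norm z < 1 \<Longrightarrow> norm (k z) < 1"
    unfolding k_def using lt1 a1 by (auto intro: Moebius_function_norm_lt_1)
  have dh: "(h has_field_derivative deriv h 0) (at 0)"
    using holh by (auto intro: holomorphic_derivI)
  have nz: "1 - cnj a * a \<noteq> 0" using pos unfolding cnj_a_a by (metis less_irrefl of_real_0 of_real_eq_iff)
  have "(k has_field_derivative
      (deriv h 0 * (1 - cnj a * h 0) - (h 0 - a) * - (cnj a * deriv h 0)) / (1 - cnj a * h 0)^2) (at 0)"
    unfolding k_def Moebius_function_simple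
    using nz by (auto intro!: derivative_eq_intros dh simp: a_def power2_eq_square)
  then have "deriv k 0 = deriv h 0 / of_real (1 - norm a ^ 2)"
    using nz unfolding cnj_a_a[symmetric] by (intro DERIV_imp_deriv) (simp add: a_def power2_eq_square)
  then have "norm (deriv h 0) = norm (deriv k 0) * (1 - norm a ^ 2)"
    using pos by (simp add: norm_divide del: of_real_diff of_real_power)
  also have "\<dots> \<le> 1 - norm a ^ 2"
    using Schwarz_Lemma(2)[OF holk k0 klt, of 0] pos by (simp add: mult_left_le_one_le)
  finally show ?thesis by (simp add: a_def)
qed

lemma Schwarz_second_deriv_bound:
  assumes holw: "w holomorphic_on ball 0 1" and w0: "w 0 = 0"
    and lt1: "\<And>z. z \<in> ball 0 1 \<Longrightarrow> norm (w z) < 1"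
  shows "norm (deriv (deriv w) 0) \<le> 2 * (1 - norm (deriv w 0)^2)"
proof -
  obtain h where holh: "h holomorphic_on ball 0 1" and w_eq: "\<And>z. norm z < 1 \<Longrightarrow> w z = z * h z"
      and dw0: "deriv w 0 = h 0"
    using Schwarz3[OF holw] w0 by blast
  have h_le1: "norm (h z) \<le> 1" if z: "z \<in> ball 0 1" for z
  proof (cases "z = 0")
    case True
    then show ?thesis using Schwarz_Lemma(2)[OF holw w0, of 0] lt1 dw0 by simp
  next
    case False
    have "norm z * norm (h z) \<le> norm z * 1"
      using Schwarz_Lemma(1)[OF holw w0, of z] lt1 z w_eq[of z] by (simp add: norm_mult)
    then show ?thesis using False by simp
  qed
  have dh: "\<And>z. z \<in> ball 0 1 \<Longrightarrow> (h has_field_derivative deriv h z) (at z)"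
    and ddh: "\<And>z. z \<in> ball 0 1 \<Longrightarrow> (deriv h has_field_derivative deriv (deriv h) z) (at z)"
    using holh holomorphic_deriv[OF holh] by (auto intro: holomorphic_derivI)
  have dw: "deriv w z = h z + z * deriv h z" if z: "z \<in> ball 0 1" for z
  proof -
    have "deriv w z = deriv (\<lambda>z. z * h z) z"
      by (rule deriv_cong_open[OF open_ball z]) (simp add: w_eq)
    also have "\<dots> = h z + z * deriv h z"
      by (rule DERIV_imp_deriv) (rule derivative_eq_intros dh z refl | simp)+
    finally show ?thesis .
  qed
  have ddw0: "deriv (deriv w) 0 = 2 * deriv h 0"
  proof -
    have "deriv (deriv w) 0 = deriv (\<lambda>z. h z + z * deriv h z) 0"
      by (rule deriv_cong_open[where S="ball 0 1", OF open_ball]) (auto simp: dw)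
    also have "\<dots> = deriv h 0 + (1 * deriv h 0 + 0 * deriv (deriv h) 0)"
      by (rule DERIV_imp_deriv) (rule derivative_eq_intros dh ddh refl | simp)+
    finally show ?thesis by simp
  qed
  \<comment> \<open>Schwarz--Pick for h, unless h attains modulus 1 and is then constant\<close>
  have "norm (deriv h 0) \<le> 1 - norm (h 0)^2"
  proof (cases "\<exists>z\<in>ball 0 1. norm (h z) = 1")
    case True
    then obtain z where z: "z \<in> ball 0 1" and hz: "norm (h z) = 1" by blast
    have "h constant_on ball 0 1"
    proof (rule Schwarz2[OF holh, of "1 - norm z" z])
      show "ball z (1 - norm z) \<subseteq> ball 0 1"
        by (auto simp: ball_subset_ball_iff dist_norm)
      show "norm (z - y) < 1 - norm z \<Longrightarrow> norm (h y) \<le> norm (h z)" for y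
        using h_le1[of y] hz norm_triangle_ineq2[of y z] by (simp add: norm_minus_commute)
    qed (use z in auto)
    then obtain c where "\<And>z. z \<in> ball 0 1 \<Longrightarrow> h z = c" by (auto simp: constant_on_def)
    then have "deriv h 0 = deriv (\<lambda>_. c) 0" by (intro deriv_cong_open[where S="ball 0 1", OF open_ball]) auto
    then show ?thesis using h_le1[of 0] by (simp add: abs_square_le_1)
  next
    case False
    then show ?thesis using h_le1 by (intro Schwarz_Pick_deriv_0 holh) (auto simp: order_le_less)
  qed
  then show ?thesis using ddw0 dw0 by (simp add: norm_mult)
qed

lemma deriv_compose_higher:
  assumes holh: "h holomorphic_on T" and oT: "open T" and holk: "k holomorphic_on S" and oS: "open S"
    and sub: "k ` S \<subseteq> T" and z: "z \<in> S"
  shows "deriv (\<lambda>x. h (k x)) z = deriv h (k z) * deriv k z"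
    and "deriv (deriv (\<lambda>x. h (k x))) z =
          deriv (deriv h) (k z) * (deriv k z)^2 + deriv h (k z) * deriv (deriv k) z"
    and "deriv (deriv (deriv (\<lambda>x. h (k x)))) z =
          deriv (deriv (deriv h)) (k z) * (deriv k z)^3
          + 3 * deriv (deriv h) (k z) * deriv k z * deriv (deriv k) z
          + deriv h (k z) * deriv (deriv (deriv k)) z"
proof -
  have h1: "deriv h holomorphic_on T" and h2: "deriv (deriv h) holomorphic_on T"
    using holh oT by (auto intro: holomorphic_deriv)
  have k1: "deriv k holomorphic_on S" and k2: "deriv (deriv k) holomorphic_on S"
    using holk oS by (auto intro: holomorphic_deriv)
  have chain: "\<And>F x. F holomorphic_on T \<Longrightarrow> x \<in> S \<Longrightarrow>
      ((\<lambda>x. F (k x)) has_field_derivative deriv F (k x) * deriv k x) (at x)"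
    using holk oT oS sub by (intro DERIV_chain2 holomorphic_derivI) auto
  have hasder: "\<And>F x. F holomorphic_on S \<Longrightarrow> x \<in> S \<Longrightarrow> (F has_field_derivative deriv F x) (at x)"
    using oS by (auto intro: holomorphic_derivI)
  have D1: "deriv (\<lambda>x. h (k x)) x = deriv h (k x) * deriv k x" if "x \<in> S" for x
    using chain[OF holh that] by (rule DERIV_imp_deriv)
  then show "deriv (\<lambda>x. h (k x)) z = deriv h (k z) * deriv k z" using z .
  have D2: "deriv (deriv (\<lambda>x. h (k x))) x =
      deriv (deriv h) (k x) * (deriv k x)^2 + deriv h (k x) * deriv (deriv k) x" if x: "x \<in> S" for x
  proof -
    have "deriv (deriv (\<lambda>x. h (k x))) x = deriv (\<lambda>x. deriv h (k x) * deriv k x) x"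
      by (rule deriv_cong_open[OF oS x D1])
    also have "\<dots> = deriv h (k x) * deriv (deriv k) x + deriv (deriv h) (k x) * deriv k x * deriv k x"
      using DERIV_imp_deriv[OF DERIV_mult'[OF chain[OF h1 x] hasder[OF k1 x]]] .
    finally show ?thesis by (simp add: power2_eq_square)
  qed
  then show "deriv (deriv (\<lambda>x. h (k x))) z =
      deriv (deriv h) (k z) * (deriv k z)^2 + deriv h (k z) * deriv (deriv k) z" using z .
  have "deriv (deriv (deriv (\<lambda>x. h (k x)))) z =
      deriv (\<lambda>x. deriv (deriv h) (k x) * (deriv k x * deriv k x) + deriv h (k x) * deriv (deriv k) x) z"
    by (rule deriv_cong_open[OF oS z]) (simp add: D2 power2_eq_square)
  also note DERIV_imp_deriv[OF DERIV_add[OF DERIV_mult'[OF chain[OF h2 z] DERIV_mult'[OF hasder[OF k1 z] hasder[OF k1 z]]]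
       DERIV_mult'[OF chain[OF h1 z] hasder[OF k2 z]]]]
  finally show "deriv (deriv (deriv (\<lambda>x. h (k x)))) z =
      deriv (deriv (deriv h)) (k z) * (deriv k z)^3
      + 3 * deriv (deriv h) (k z) * deriv k z * deriv (deriv k) z
      + deriv h (k z) * deriv (deriv (deriv k)) z"
    by (simp add: algebra_simps power3_eq_cube)
qed

lemma deriv_eq_id_on_open:
  assumes "open W" "z \<in> W" "\<And>x. x \<in> W \<Longrightarrow> F x = x"
  shows "deriv F z = 1" "deriv (deriv F) z = 0" "deriv (deriv (deriv F)) z = 0"
proof -
  have d1: "deriv F x = 1" if "x \<in> W" for x
    using deriv_cong_open[OF assms(1) that assms(3)] by simp
  have d2: "deriv (deriv F) x = 0" if "x \<in> W" for x
    using deriv_cong_open[OF assms(1) that d1] by simp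
  show "deriv F z = 1" "deriv (deriv F) z = 0" using d1 d2 assms(2) by auto
  show "deriv (deriv (deriv F)) z = 0"
    using deriv_cong_open[OF assms(1,2) d2] by simp
qed

lemma inverse_ext_derivs_0:
  assumes holf: "f holomorphic_on unit_disc" and f0: "f 0 = 0" and df0: "deriv f 0 = 1"
    and inv: "inverse_ext f g"
  shows "deriv g 0 = 1"
    and "deriv (deriv g) 0 = - deriv (deriv f) 0"
    and "deriv (deriv (deriv g)) 0 = 3 * (deriv (deriv f) 0)^2 - deriv (deriv (deriv f)) 0"
proof -
  have holg: "g holomorphic_on ball 0 1" using inv by (simp add: inverse_ext_def unit_disc_def)
  obtain W where oW: "open W" and W0: "0 \<in> W" and gf: "\<And>z. z \<in> W \<Longrightarrow> g (f z) = z"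
    using inv unfolding inverse_ext_def eventually_nhds by blast
  define V where "V = ball 0 1 \<inter> f -` ball 0 1 \<inter> W"
  have holf': "f holomorphic_on V"
    using holf by (rule holomorphic_on_subset) (auto simp: V_def unit_disc_def)
  have oV: "open V" unfolding V_def using holf
    by (intro open_Int oW continuous_open_preimage holomorphic_on_imp_continuous_on open_ball)
      (auto simp: unit_disc_def)
  have V0: "0 \<in> V" using W0 f0 by (simp add: V_def)
  have "f ` V \<subseteq> ball 0 1" by (auto simp: V_def)
  note comp = deriv_compose_higher[OF holg open_ball holf' oV this V0]
  note id = deriv_eq_id_on_open[OF oV V0, of "\<lambda>x. g (f x)"]
  have gf_V: "\<And>x. x \<in> V \<Longrightarrow> g (f x) = x" using gf by (auto simp: V_def)
  show dg: "deriv g 0 = 1" using comp(1) id(1)[OF gf_V] f0 df0 by simp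
  show ddg: "deriv (deriv g) 0 = - deriv (deriv f) 0"
    using comp(2) id(2)[OF gf_V] f0 df0 dg by (simp add: add_eq_0_iff)
  have "deriv (deriv (deriv g)) 0 - 3 * (deriv (deriv f) 0)^2 + deriv (deriv (deriv f)) 0 = 0"
    using comp(3) id(3)[OF gf_V] f0 df0 dg ddg by (simp add: power2_eq_square mult.assoc)
  then show "deriv (deriv (deriv g)) 0 = 3 * (deriv (deriv f) 0)^2 - deriv (deriv (deriv f)) 0"
    by (simp add: algebra_simps eq_diff_eq add_eq_0_iff)
qed

lemma deriv_G_expr_0:
  assumes holf: "f holomorphic_on S" and oS: "open S" and S0: "0 \<in> S" and df0: "deriv f 0 = 1"
  shows "deriv (G_expr lam f) 0 = deriv (deriv f) 0"
    and "deriv (deriv (G_expr lam f)) 0 =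
          (1 + of_real lam) * deriv (deriv (deriv f)) 0 - 2 * of_real lam * (deriv (deriv f) 0)^2"
proof -
  define D1 where "D1 = deriv f"
  define D2 where "D2 = deriv D1"
  define D3 where "D3 = deriv D2"
  define L where "L = (of_real lam :: complex)"
  have h1: "D1 holomorphic_on S" and h2: "D2 holomorphic_on S" and h3: "D3 holomorphic_on S"
    unfolding D1_def D2_def D3_def using holf oS by (auto intro!: holomorphic_deriv)
  have H1: "\<And>x. x \<in> S \<Longrightarrow> (D1 has_field_derivative D2 x) (at x)"
    unfolding D2_def using h1 oS by (rule holomorphic_derivI)
  have H2: "\<And>x. x \<in> S \<Longrightarrow> (D2 has_field_derivative D3 x) (at x)"
    unfolding D3_def using h2 oS by (rule holomorphic_derivI)
  have H3: "\<And>x. x \<in> S \<Longrightarrow> (D3 has_field_derivative deriv D3 x) (at x)"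
    using h3 oS by (rule holomorphic_derivI)
  \<comment> \<open>G_expr divides by f', so differentiate on the open set where f' does not vanish\<close>
  define S' where "S' = S \<inter> D1 -` (-{0})"
  have oS': "open S'" unfolding S'_def
    by (rule continuous_open_preimage[OF holomorphic_on_imp_continuous_on[OF h1] oS]) auto
  have S'0: "0 \<in> S'" using S0 df0 by (simp add: S'_def D1_def)
  have inS: "\<And>x. x \<in> S' \<Longrightarrow> x \<in> S" and nz: "\<And>x. x \<in> S' \<Longrightarrow> D1 x \<noteq> 0"
    by (auto simp: S'_def)
  have G_eq: "G_expr lam f = (\<lambda>z. (1 - L) * D1 z + L * (1 + z * D2 z / D1 z))"
    by (simp add: fun_eq_iff G_expr_def D1_def D2_def L_def)
  define G1 where "G1 = (\<lambda>z. (1 - L) * D2 z + L * (D2 z / D1 z)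
        + L * (z * ((D3 z * D1 z - D2 z * D2 z) / (D1 z * D1 z))))"
  have dG: "deriv (G_expr lam f) x = G1 x" if x: "x \<in> S'" for x
    unfolding G_eq G1_def using x inS nz[OF x]
    by (intro DERIV_imp_deriv) (auto intro!: derivative_eq_intros H1 H2 simp: field_simps power2_eq_square)
  show "deriv (G_expr lam f) 0 = deriv (deriv f) 0"
    using dG[OF S'0] df0 by (simp add: G1_def D2_def D1_def algebra_simps)
  have "deriv (deriv (G_expr lam f)) 0 = deriv G1 0"
    by (rule deriv_cong_open[OF oS' S'0 dG])
  also have "\<dots> = (1 - L) * D3 0 + L * ((D3 0 * D1 0 - D2 0 * D2 0) / (D1 0 * D1 0))
        + L * ((D3 0 * D1 0 - D2 0 * D2 0) / (D1 0 * D1 0))"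
    unfolding G1_def using S'0 inS nz[OF S'0]
    by (intro DERIV_imp_deriv) (auto intro!: derivative_eq_intros H1 H2 H3 simp: field_simps power2_eq_square)
  finally show "deriv (deriv (G_expr lam f)) 0 =
          (1 + of_real lam) * deriv (deriv (deriv f)) 0 - 2 * of_real lam * (deriv (deriv f) 0)^2"
    using df0 by (simp add: D1_def[symmetric] D2_def[symmetric] D3_def[symmetric] L_def[symmetric]
        algebra_simps power2_eq_square)
qed

lemma subordinate_derivs_0:
  assumes hol\<phi>: "\<phi> holomorphic_on unit_disc" and "subordinate G \<phi>"
  obtains c1 c2 where "deriv G 0 = deriv \<phi> 0 * c1"
    and "deriv (deriv G) 0 = deriv (deriv \<phi>) 0 * c1^2 + deriv \<phi> 0 * c2"
    and "norm c2 \<le> 2 * (1 - norm c1 ^ 2)"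
proof -
  obtain u where holu: "u holomorphic_on ball 0 1" and u0: "u 0 = 0"
    and u_lt1: "\<forall>z\<in>ball 0 1. norm (u z) < 1" and G_eq: "\<forall>z\<in>ball 0 1. G z = \<phi> (u z)"
    using assms(2) by (auto simp: subordinate_def unit_disc_def)
  have "u ` ball 0 1 \<subseteq> ball 0 1" using u_lt1 by auto
  note comp = deriv_compose_higher[OF hol\<phi>[unfolded unit_disc_def] open_ball holu open_ball this]
  have dG: "deriv G x = deriv (\<lambda>x. \<phi> (u x)) x" if "x \<in> ball 0 1" for x
    by (rule deriv_cong_open[OF open_ball that]) (use G_eq in blast)
  have ddG: "deriv (deriv G) 0 = deriv (deriv (\<lambda>x. \<phi> (u x))) 0"
    by (rule deriv_cong_open[where S="ball 0 1", OF open_ball _ dG]) auto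
  have "deriv G 0 = deriv \<phi> 0 * deriv u 0"
    using dG[of 0] comp(1)[of 0] u0 by simp
  moreover have "deriv (deriv G) 0 = deriv (deriv \<phi>) 0 * (deriv u 0)^2 + deriv \<phi> 0 * deriv (deriv u) 0"
    using ddG comp(2)[of 0] u0 by simp
  moreover have "norm (deriv (deriv u) 0) \<le> 2 * (1 - norm (deriv u 0) ^ 2)"
    using Schwarz_second_deriv_bound[OF holu u0] u_lt1 by blast
  ultimately show ?thesis by (rule that)
qed

lemma class_G_deriv_relations:
  assumes hol\<phi>: "\<phi> holomorphic_on unit_disc" and f: "f \<in> class_G lam \<phi>"
  defines "F2 \<equiv> deriv (deriv f) 0" and "F3 \<equiv> deriv (deriv (deriv f)) 0"
    and "L \<equiv> complex_of_real lam"
  obtains U1 U2 V1 V2 where "F2 = deriv \<phi> 0 * U1"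
    and "(1 + L) * F3 - 2 * L * F2^2 = deriv (deriv \<phi>) 0 * U1^2 + deriv \<phi> 0 * U2"
    and "- F2 = deriv \<phi> 0 * V1"
    and "(1 + L) * (3 * F2^2 - F3) - 2 * L * F2^2 = deriv (deriv \<phi>) 0 * V1^2 + deriv \<phi> 0 * V2"
    and "norm U2 \<le> 2 * (1 - norm U1 ^ 2)" and "norm V2 \<le> 2 * (1 - norm V1 ^ 2)"
proof -
  have holf: "f holomorphic_on unit_disc" and f0: "f 0 = 0" and df0: "deriv f 0 = 1"
    and sub_f: "subordinate (G_expr lam f) \<phi>"
    using f by (auto simp: class_G_def bi_univalent_def)
  obtain g where g: "inverse_ext f g" using f by (auto simp: class_G_def bi_univalent_def)
  have holg: "g holomorphic_on unit_disc" and sub_g: "subordinate (G_expr lam g) \<phi>"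
    using f g by (auto simp: class_G_def inverse_ext_def)
  note g_derivs = inverse_ext_derivs_0[OF holf f0 df0 g]
  note Gf = deriv_G_expr_0[OF holf[unfolded unit_disc_def] open_ball _ df0, of lam, simplified]
  note Gg = deriv_G_expr_0[OF holg[unfolded unit_disc_def] open_ball _ g_derivs(1), of lam, simplified]
  obtain U1 U2 where U1: "deriv (G_expr lam f) 0 = deriv \<phi> 0 * U1"
    and U2: "deriv (deriv (G_expr lam f)) 0 = deriv (deriv \<phi>) 0 * U1^2 + deriv \<phi> 0 * U2"
    and U: "norm U2 \<le> 2 * (1 - norm U1 ^ 2)"
    by (rule subordinate_derivs_0[OF hol\<phi> sub_f])
  obtain V1 V2 where V1: "deriv (G_expr lam g) 0 = deriv \<phi> 0 * V1"
    and V2: "deriv (deriv (G_expr lam g)) 0 = deriv (deriv \<phi>) 0 * V1^2 + deriv \<phi> 0 * V2"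
    and V: "norm V2 \<le> 2 * (1 - norm V1 ^ 2)"
    by (rule subordinate_derivs_0[OF hol\<phi> sub_g])
  show ?thesis
  proof (rule that[OF _ _ _ _ U V])
    show "F2 = deriv \<phi> 0 * U1" using Gf(1) U1 by (simp add: F2_def)
    show "(1 + L) * F3 - 2 * L * F2^2 = deriv (deriv \<phi>) 0 * U1^2 + deriv \<phi> 0 * U2"
      using Gf(2) U2 by (simp add: F2_def F3_def L_def)
    show "- F2 = deriv \<phi> 0 * V1" using Gg(1) V1 g_derivs(2) by (simp add: F2_def)
    show "(1 + L) * (3 * F2^2 - F3) - 2 * L * F2^2 = deriv (deriv \<phi>) 0 * V1^2 + deriv \<phi> 0 * V2"
      using Gg(2) V2 g_derivs(2,3) by (simp add: F2_def F3_def L_def)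
  qed
qed

lemma admissible_phi_derivs_0:
  assumes "admissible_phi \<phi>"
  shows "deriv \<phi> 0 = of_real (Re (taylor_coeff \<phi> 1))"
    and "deriv (deriv \<phi>) 0 = 2 * of_real (Re (taylor_coeff \<phi> 2))"
    and "Re (taylor_coeff \<phi> 1) > 0"
proof -
  have tc1: "taylor_coeff \<phi> 1 = deriv \<phi> 0" and tc2: "taylor_coeff \<phi> 2 = deriv (deriv \<phi>) 0 / 2"
    by (simp_all add: taylor_coeff_def numeral_2_eq_2)
  have "Im (taylor_coeff \<phi> 1) = 0" "Im (taylor_coeff \<phi> 2) = 0" "Re (deriv \<phi> 0) > 0"
    using assms by (auto simp: admissible_phi_def)
  then show "deriv \<phi> 0 = of_real (Re (taylor_coeff \<phi> 1))"
    and "deriv (deriv \<phi>) 0 = 2 * of_real (Re (taylor_coeff \<phi> 2))"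
    and "Re (taylor_coeff \<phi> 1) > 0"
    unfolding tc1 tc2 by (simp_all add: complex_eq_iff)
qed

lemma coefficient_equations_sum_diff:
  fixes F2 F3 U1 U2 V1 V2 L b c :: "'a :: field"
  assumes b: "b \<noteq> 0"
    and e1: "F2 = b * U1"
    and e2: "(1 + L) * F3 - 2 * L * F2^2 = c * U1^2 + b * U2"
    and e3: "- F2 = b * V1"
    and e4: "(1 + L) * (3 * F2^2 - F3) - 2 * L * F2^2 = c * V1^2 + b * V2"
  shows "V1 = - U1"
    and "(3 - L) * F2^2 = 2 * c * U1^2 + b * (U2 + V2)"
    and "2 * (1 + L) * F3 - 3 * (1 + L) * F2^2 = b * (U2 - V2)"
proof -
  have "b * V1 = b * - U1" using e1 e3 by simp
  then show V1: "V1 = - U1" by (simp only: mult_left_cancel[OF b])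
  have "(3 - L) * F2^2 = ((1 + L) * F3 - 2 * L * F2^2) + ((1 + L) * (3 * F2^2 - F3) - 2 * L * F2^2)"
    by (simp add: algebra_simps)
  also have "\<dots> = 2 * c * U1^2 + b * (U2 + V2)"
    unfolding e2 e4 V1 by (simp add: algebra_simps)
  finally show "(3 - L) * F2^2 = 2 * c * U1^2 + b * (U2 + V2)" .
  have "2 * (1 + L) * F3 - 3 * (1 + L) * F2^2
       = ((1 + L) * F3 - 2 * L * F2^2) - ((1 + L) * (3 * F2^2 - F3) - 2 * L * F2^2)"
    by (simp add: algebra_simps)
  also have "\<dots> = b * (U2 - V2)"
    unfolding e2 e4 V1 by (simp add: algebra_simps)
  finally show "2 * (1 + L) * F3 - 3 * (1 + L) * F2^2 = b * (U2 - V2)" .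
qed

lemma a2_estimate:
  fixes F2 U1 U2 V2 :: complex and lam B1 B2 :: real
  assumes B1: "B1 > 0"
    and e1: "F2 = of_real B1 * U1"
    and sum: "(3 - of_real lam) * F2^2 = 4 * of_real B2 * U1^2 + of_real B1 * (U2 + V2)"
    and U2: "norm U2 \<le> 2 * (1 - norm U1 ^ 2)" and V2: "norm V2 \<le> 2 * (1 - norm U1 ^ 2)"
  shows "norm (F2 / 2) ^ 2 * (4 * B1 + \<bar>(3 - lam) * B1^2 - 4 * B2\<bar>) \<le> B1^3"
proof -
  define K where "K = (3 - lam) * B1^2 - 4 * B2"
  have "F2^2 * of_real K = (3 - of_real lam) * F2^2 * of_real B1 ^ 2 - 4 * of_real B2 * (of_real B1 * U1)^2"
    by (simp add: K_def e1 algebra_simps power2_eq_square)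
  also have "\<dots> = of_real B1 ^ 3 * (U2 + V2)"
    by (subst sum) (simp add: algebra_simps power2_eq_square power3_eq_cube)
  finally have "norm F2 ^ 2 * \<bar>K\<bar> = B1^3 * norm (U2 + V2)"
    using B1 by (metis abs_of_pos norm_mult norm_of_real norm_power zero_less_power)
  also have "\<dots> \<le> B1^3 * (4 * (1 - norm U1 ^ 2))"
    using norm_triangle_ineq[of U2 V2] U2 V2 B1 by (intro mult_left_mono) auto
  also have "\<dots> = 4 * B1^3 - 4 * B1 * norm F2 ^ 2"
    by (simp add: e1 norm_mult power_mult_distrib algebra_simps power2_eq_square power3_eq_cube)
  finally have "norm F2 ^ 2 * (4 * B1 + \<bar>K\<bar>) \<le> 4 * B1^3" by (simp add: algebra_simps)
  then show ?thesis by (simp add: K_def norm_divide power_divide)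
qed

lemma a3_estimate:
  fixes F2 F3 U1 U2 V2 :: complex and lam B1 :: real
  assumes lam: "lam \<ge> 0" and B1: "B1 > 0"
    and e1: "F2 = of_real B1 * U1"
    and diff: "2 * (1 + of_real lam) * F3 - 3 * (1 + of_real lam) * F2^2 = of_real B1 * (U2 - V2)"
    and U2: "norm U2 \<le> 2 * (1 - norm U1 ^ 2)" and V2: "norm V2 \<le> 2 * (1 - norm U1 ^ 2)"
  shows "norm (F3 / 6) \<le> norm (F2 / 2) ^ 2 * (1 - 4 / (3 * (1 + lam) * B1)) + B1 / (3 * (1 + lam))"
proof -
  define a where "a = norm (F2 / 2)"
  define c where "c = 1 + complex_of_real lam"
  have c_real: "c = of_real (1 + lam)" by (simp add: c_def)
  have norm_c: "norm c = 1 + lam" using lam by (simp only: c_real norm_of_real)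
  then have c_nz: "c \<noteq> 0" using lam by auto
  have diff_c: "2 * c * F3 = 3 * c * F2^2 + of_real B1 * (U2 - V2)"
    using diff[folded c_def] by (simp add: algebra_simps)
  have alg: "a^2 + B1 * (4 * (1 - (2 * a / B1) ^ 2)) / (12 * t)
      = a^2 * (1 - 4 / (3 * t * B1)) + B1 / (3 * t)" if "t > 0" for t
    using B1 that by (simp add: field_simps power2_eq_square)
  have "F3 / 6 = 2 * c * F3 / (12 * c)"
    using c_nz by simp
  also have "\<dots> = (3 * c * F2^2 + of_real B1 * (U2 - V2)) / (12 * c)"
    by (simp only: diff_c)
  also have "\<dots> = (F2 / 2)^2 + of_real B1 * (U2 - V2) / (12 * c)"
    using c_nz by (simp add: add_divide_distrib power2_eq_square)
  finally have "norm (F3 / 6) \<le> norm ((F2 / 2)^2) + norm (of_real B1 * (U2 - V2) / (12 * c))"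
    by (simp only: norm_triangle_ineq)
  also have "norm ((F2 / 2)^2) = a^2" by (simp add: a_def norm_power)
  also have "norm (of_real B1 * (U2 - V2) / (12 * c)) = B1 * norm (U2 - V2) / (12 * (1 + lam))"
    using B1 by (simp add: norm_mult norm_divide norm_c)
  also have "B1 * norm (U2 - V2) / (12 * (1 + lam)) \<le> B1 * (4 * (1 - norm U1 ^ 2)) / (12 * (1 + lam))"
    using norm_triangle_ineq4[of U2 V2] U2 V2 B1 lam
    by (intro divide_right_mono mult_left_mono) auto
  also have "norm U1 = 2 * a / B1"
    using B1 by (simp add: a_def e1 norm_mult norm_divide)
  also have "a^2 + B1 * (4 * (1 - (2 * a / B1) ^ 2)) / (12 * (1 + lam))
      = a^2 * (1 - 4 / (3 * (1 + lam) * B1)) + B1 / (3 * (1 + lam))"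
    by (rule alg) (use lam in simp)
  finally show ?thesis by (simp add: a_def)
qed

lemma coefficient_bounds_of_estimates:
  fixes a x lam B1 D :: real
  assumes lam: "lam \<ge> 0" and B1: "B1 > 0" and D: "D > 0" and a: "a \<ge> 0"
    and a2: "a^2 * D \<le> B1^3"
    and a3: "x \<le> a^2 * (1 - 4 / (3 * (1 + lam) * B1)) + B1 / (3 * (1 + lam))"
  shows "a \<le> B1 * sqrt B1 / sqrt D \<and>
    x \<le> (if B1 \<ge> 4 / (3 * (1 + lam))
         then (1 - 4 / (3 * (1 + lam) * B1)) * B1^3 / D + B1 / (3 * (1 + lam))
         else B1 / (3 * (1 + lam)))"
proof
  have a2': "a^2 \<le> B1^3 / D" using a2 D by (simp add: pos_le_divide_eq)
  have "a = sqrt (a^2)" using a by simp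
  also have "\<dots> \<le> sqrt (B1^3 / D)" using a2' by (rule real_sqrt_le_mono)
  also have "\<dots> = B1 * sqrt B1 / sqrt D"
    using B1 D by (simp add: real_sqrt_divide real_sqrt_mult power3_eq_cube)
  finally show "a \<le> B1 * sqrt B1 / sqrt D" .
  have sign: "0 \<le> 1 - 4 / (3 * (1 + lam) * B1) \<longleftrightarrow> 4 / (3 * (1 + lam)) \<le> B1"
    using B1 lam by (simp add: pos_divide_le_eq mult.commute mult.left_commute)
  show "x \<le> (if B1 \<ge> 4 / (3 * (1 + lam))
         then (1 - 4 / (3 * (1 + lam) * B1)) * B1^3 / D + B1 / (3 * (1 + lam))
         else B1 / (3 * (1 + lam)))"
  proof (cases "B1 \<ge> 4 / (3 * (1 + lam))")
    case True
    have "a^2 * (1 - 4 / (3 * (1 + lam) * B1)) \<le> B1^3 / D * (1 - 4 / (3 * (1 + lam) * B1))"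
      using True sign by (intro mult_right_mono[OF a2']) simp
    then have "a^2 * (1 - 4 / (3 * (1 + lam) * B1)) \<le> (1 - 4 / (3 * (1 + lam) * B1)) * B1^3 / D"
      by (simp add: mult.commute)
    then show ?thesis using True a3 by simp
  next
    case False
    then have "a^2 * (1 - 4 / (3 * (1 + lam) * B1)) \<le> 0"
      using sign by (simp add: mult_nonneg_nonpos)
    then show ?thesis using False a3 by simp
  qed
qed

theorem theorem2p1:
  fixes lam :: real and \<phi> f :: "complex \<Rightarrow> complex"
  assumes "0 \<le> lam" and "lam \<le> 1"
    and "admissible_phi \<phi>"
    and "f \<in> class_G lam \<phi>"
  defines "B1 \<equiv> Re (taylor_coeff \<phi> 1)" and "B2 \<equiv> Re (taylor_coeff \<phi> 2)"
  shows "norm (taylor_coeff f 2) \<le>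
           B1 * sqrt B1 / sqrt (4 * B1 + \<bar>(3 - lam) * B1^2 - 4 * B2\<bar>) \<and>
         norm (taylor_coeff f 3) \<le>
           (if B1 \<ge> 4 / (3 * (1 + lam))
            then (1 - 4 / (3 * (1 + lam) * B1)) * B1^3 / (4 * B1 + \<bar>(3 - lam) * B1^2 - 4 * B2\<bar>)
                 + B1 / (3 * (1 + lam))
            else B1 / (3 * (1 + lam)))"
proof -
  define F2 where "F2 = deriv (deriv f) 0"
  define F3 where "F3 = deriv (deriv (deriv f)) 0"
  note \<phi>_derivs = admissible_phi_derivs_0[OF assms(3), folded B1_def B2_def]
  have "\<phi> holomorphic_on unit_disc" using assms(3) by (simp add: admissible_phi_def)
  then obtain U1 U2 V1 V2 where e1: "F2 = of_real B1 * U1"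
    and e2: "(1 + of_real lam) * F3 - 2 * of_real lam * F2^2 = 2 * of_real B2 * U1^2 + of_real B1 * U2"
    and e3: "- F2 = of_real B1 * V1"
    and e4: "(1 + of_real lam) * (3 * F2^2 - F3) - 2 * of_real lam * F2^2
               = 2 * of_real B2 * V1^2 + of_real B1 * V2"
    and U2: "norm U2 \<le> 2 * (1 - norm U1 ^ 2)" and V2: "norm V2 \<le> 2 * (1 - norm V1 ^ 2)"
    by (rule class_G_deriv_relations[OF _ assms(4), folded F2_def F3_def, unfolded \<phi>_derivs(1,2)])
  have "complex_of_real B1 \<noteq> 0" using \<phi>_derivs(3) by simp
  note sum_diff = coefficient_equations_sum_diff[OF this e1 e2 e3 e4]
  have V2': "norm V2 \<le> 2 * (1 - norm U1 ^ 2)" using V2 by (simp add: sum_diff(1))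
  have a2: "norm (F2 / 2) ^ 2 * (4 * B1 + \<bar>(3 - lam) * B1^2 - 4 * B2\<bar>) \<le> B1^3"
    using sum_diff(2) by (intro a2_estimate[OF \<phi>_derivs(3) e1 _ U2 V2']) simp
  have a3: "norm (F3 / 6) \<le> norm (F2 / 2) ^ 2 * (1 - 4 / (3 * (1 + lam) * B1)) + B1 / (3 * (1 + lam))"
    by (rule a3_estimate[OF assms(1) \<phi>_derivs(3) e1 sum_diff(3) U2 V2'])
  have taylor: "taylor_coeff f 2 = F2 / 2" "taylor_coeff f 3 = F3 / 6"
    by (simp_all add: taylor_coeff_def F2_def F3_def numeral_2_eq_2 numeral_3_eq_3)
  have "4 * B1 + \<bar>(3 - lam) * B1^2 - 4 * B2\<bar> > 0" using \<phi>_derivs(3) by simp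
  then show ?thesis unfolding taylor
    by (rule coefficient_bounds_of_estimates[OF assms(1) \<phi>_derivs(3) _ norm_ge_zero a2 a3])
qed

end
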